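(* Let $k\ge 2$. Let $\theta$ be an antimorphic involution on $\Sigma^*$ and $\theta'$ an antimorphic involution on $\Sigma'^*$, for finite alphabets $\Sigma,\Sigma'$, such that $|\operatorname{Trn}(\theta')|\ge|\operatorname{Trn}(\theta)|$ and $|\operatorname{Idt}(\theta')|+|\operatorname{Trn}(\theta')|\ge|\operatorname{Idt}(\theta)|+|\operatorname{Trn}(\theta)|$. If there is an infinite word over $\Sigma$ that is pseudo-$k$th-power-free with respect to $\theta$, then there is an infinite word over $\Sigma'$ that is pseudo-$k$th-power-free with respect to $\theta'$.
   Context: Alphabets are totally ordered (letters $0,1,2,\dots$). A function $\theta:\Sigma^*\to\Sigma^*$ is an antimorphic involution if $\theta(uv)=\theta(v)\theta(u)$ and $\theta(\theta(w))=w$. $\operatorname{Idt}(\theta)=\{a\in\Sigma:\theta(a)=a\}$ and $\operatorname{Trn}(\theta)=\{a\in\Sigma:\theta(a)>a\}$. A nonempty word $w$ is a pseudo $k$th power with respect to $\theta$ if $w=u_1\cdots u_k$ where for all $1\le i,j\le k$, $u_i=u_j$ or $u_i=\theta(u_j)$; a word is pseudo-$k$th-power-free if no factor (contiguous subword) of it is a pseudo $k$th power. *)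

theory Defs
  imports Main
begin

definition antimorphic_involution :: "nat set \<Rightarrow> (nat list \<Rightarrow> nat list) \<Rightarrow> bool" where
  "antimorphic_involution S \<theta> \<longleftrightarrow>
     (\<forall>w \<in> lists S. \<theta> w \<in> lists S \<and> \<theta> (\<theta> w) = w) \<and>
     (\<forall>u \<in> lists S. \<forall>v \<in> lists S. \<theta> (u @ v) = \<theta> v @ \<theta> u)"

definition Idt :: "nat set \<Rightarrow> (nat list \<Rightarrow> nat list) \<Rightarrow> nat set" where
  "Idt S \<theta> = {a \<in> S. \<theta> [a] = [a]}"

definition Trn :: "nat set \<Rightarrow> (nat list \<Rightarrow> nat list) \<Rightarrow> nat set" where
  "Trn S \<theta> = {a \<in> S. \<exists>b. \<theta> [a] = [b] \<and> b > a}"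

definition pseudo_power :: "(nat list \<Rightarrow> nat list) \<Rightarrow> nat \<Rightarrow> nat list \<Rightarrow> bool" where
  "pseudo_power \<theta> k w \<longleftrightarrow> w \<noteq> [] \<and>
     (\<exists>us. length us = k \<and> concat us = w \<and>
        (\<forall>i<k. \<forall>j<k. us ! i = us ! j \<or> us ! i = \<theta> (us ! j)))"

definition infinite_pseudo_power_free :: "nat set \<Rightarrow> (nat list \<Rightarrow> nat list) \<Rightarrow> nat \<Rightarrow> (nat \<Rightarrow> nat) \<Rightarrow> bool" where
  "infinite_pseudo_power_free S \<theta> k x \<longleftrightarrow>
     (\<forall>n. x n \<in> S) \<and> (\<forall>i j. i < j \<longrightarrow> \<not> pseudo_power \<theta> k (map x [i..<j]))"

end

theory Submission
  imports Defs
begin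

text \<open>An antimorphic involution \<theta> is the reversal of a letter involution t; Trn(\<theta>) and Idt(\<theta>)
  are the letters a with a < t(a) and the fixed letters of t. Map the letters of Trn(\<theta>)
  injectively into Trn(\<theta>'), their partners to the corresponding partners, and the fixed letters
  into the fixed letters of \<theta>' or the unused letters of Trn(\<theta>'); the cardinality hypotheses
  make this possible. The resulting letter embedding \<phi> reflects the relation ``v = \<theta>(u)'':
  whenever \<phi>(v) = \<theta>'(\<phi>(u)) for words u, v over the source alphabet, already v = \<theta>(u). Hence \<phi>
  maps pseudo-k-th-power-free words to pseudo-k-th-power-free words.\<close>

definition involution_on :: "'a set \<Rightarrow> ('a \<Rightarrow> 'a) \<Rightarrow> bool" where
  "involution_on S t \<longleftrightarrow> (\<forall>a\<in>S. t a \<in> S \<and> t (t a) = a)"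

text \<open>\<phi> need not commute with the involutions: a fixed letter may be sent to a letter whose
  partner lies outside the image.\<close>

definition involution_embedding ::
    "'a set \<Rightarrow> 'b set \<Rightarrow> ('a \<Rightarrow> 'a) \<Rightarrow> ('b \<Rightarrow> 'b) \<Rightarrow> ('a \<Rightarrow> 'b) \<Rightarrow> bool" where
  "involution_embedding S S' t t' \<phi> \<longleftrightarrow> inj_on \<phi> S \<and> \<phi> ` S \<subseteq> S' \<and>
     (\<forall>c\<in>S. t' (\<phi> c) \<in> \<phi> ` S \<longrightarrow> t' (\<phi> c) = \<phi> (t c))"

definition lower_letters :: "'a::linorder set \<Rightarrow> ('a \<Rightarrow> 'a) \<Rightarrow> 'a set" where
  "lower_letters S t = {a\<in>S. a < t a}"

definition fixed_letters :: "'a set \<Rightarrow> ('a \<Rightarrow> 'a) \<Rightarrow> 'a set" where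
  "fixed_letters S t = {a\<in>S. t a = a}"

lemma involution_onD:
  "involution_on S t \<Longrightarrow> a \<in> S \<Longrightarrow> t a \<in> S \<and> t (t a) = a"
  unfolding involution_on_def by blast

lemma involution_on_letter_cases:
  assumes "involution_on S t" and "a \<in> S"
  shows "a \<in> lower_letters S t \<or> a \<in> fixed_letters S t \<or>
    (a \<notin> lower_letters S t \<and> a \<notin> fixed_letters S t \<and> t a \<in> lower_letters S t)"
  using assms(2) involution_onD[OF assms] by (auto simp: lower_letters_def fixed_letters_def)

lemma lower_letters_Int_fixed_letters: "lower_letters S t \<inter> fixed_letters S t = {}"
  by (auto simp: lower_letters_def fixed_letters_def)

lemma involution_on_partner_of_lower:
  assumes "involution_on S t" and "a \<in> lower_letters S t"
  shows "t a \<in> S - lower_letters S t - fixed_letters S t"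
  using assms involution_onD[of S t a] by (auto simp: lower_letters_def fixed_letters_def)

locale embedding_construction =
  fixes S :: "'a::linorder set" and S' :: "'b::linorder set"
    and t :: "'a \<Rightarrow> 'a" and t' :: "'b \<Rightarrow> 'b" and f g :: "'a \<Rightarrow> 'b"
  assumes inv: "involution_on S t" and inv': "involution_on S' t'"
    and f_inj: "inj_on f (lower_letters S t)"
    and f_into: "f ` lower_letters S t \<subseteq> lower_letters S' t'"
    and g_inj: "inj_on g (fixed_letters S t)"
    and g_into: "g ` fixed_letters S t
      \<subseteq> fixed_letters S' t' \<union> (lower_letters S' t' - f ` lower_letters S t)"
begin

abbreviation "T \<equiv> lower_letters S t"
abbreviation "I \<equiv> fixed_letters S t"
abbreviation "T' \<equiv> lower_letters S' t'"
abbreviation "I' \<equiv> fixed_letters S' t'"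

definition embedding :: "'a \<Rightarrow> 'b" where
  "embedding a = (if a \<in> T then f a else if a \<in> I then g a else t' (f (t a)))"

lemma embedding_lower: "a \<in> T \<Longrightarrow> embedding a = f a"
  by (simp add: embedding_def)

lemma embedding_fixed: "a \<in> I \<Longrightarrow> embedding a = g a"
  by (simp add: embedding_def lower_letters_def fixed_letters_def)

lemma embedding_partner: "a \<notin> T \<Longrightarrow> a \<notin> I \<Longrightarrow> embedding a = t' (f (t a))"
  by (simp add: embedding_def)

lemma f_in_S': "a \<in> T \<Longrightarrow> f a \<in> S'"
  using f_into by (auto simp: lower_letters_def)

lemma g_in_lower_or_fixed: "a \<in> I \<Longrightarrow> g a \<in> T' \<union> I'"
  using g_into by auto

lemma embedding_into: "embedding ` S \<subseteq> S'"
proof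
  fix b assume "b \<in> embedding ` S"
  then obtain a where a: "a \<in> S" "b = embedding a" by blast
  from involution_on_letter_cases[OF inv a(1)] show "b \<in> S'"
  proof (elim disjE conjE)
    assume "a \<in> T" then show ?thesis using a embedding_lower f_in_S' by simp
  next
    assume "a \<in> I" then show ?thesis
      using a embedding_fixed g_in_lower_or_fixed by (auto simp: lower_letters_def fixed_letters_def)
  next
    assume "a \<notin> T" "a \<notin> I" "t a \<in> T"
    then show ?thesis using a embedding_partner f_in_S' involution_onD[OF inv'] by simp
  qed
qed

lemma inj_on_embedding: "inj_on embedding S"
proof (rule inj_onI)
  fix a c assume a: "a \<in> S" and c: "c \<in> S" and eq: "embedding a = embedding c"
  have f_ne_partner: "f x \<noteq> t' (f y)" if "x \<in> T" "y \<in> T" for x y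
    using involution_on_partner_of_lower[OF inv' f_into[THEN subsetD, OF imageI[OF that(2)]]]
      f_into that(1) by auto
  have g_ne_f: "g x \<noteq> f y" if "x \<in> I" "y \<in> T" for x y
    using g_into[THEN subsetD, OF imageI[OF that(1)]] f_into that(2)
      lower_letters_Int_fixed_letters[of S' t'] by blast
  have g_ne_partner: "g x \<noteq> t' (f y)" if "x \<in> I" "y \<in> T" for x y
    using involution_on_partner_of_lower[OF inv' f_into[THEN subsetD, OF imageI[OF that(2)]]]
      g_in_lower_or_fixed[OF that(1)] by auto
  have partners_eq: "a = c"
    if "a \<notin> T" "a \<notin> I" "t a \<in> T" "c \<notin> T" "c \<notin> I" "t c \<in> T"
  proof -
    have "t' (f (t a)) = t' (f (t c))" using eq that embedding_partner by simp
    then have "f (t a) = f (t c)" using f_in_S' that involution_onD[OF inv'] by metis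
    then have "t a = t c" using that inj_onD[OF f_inj] by blast
    then show ?thesis using a c involution_onD[OF inv] by metis
  qed
  from involution_on_letter_cases[OF inv a] involution_on_letter_cases[OF inv c] show "a = c"
  proof (elim disjE conjE)
    assume "a \<in> T" "c \<in> T" then show ?thesis using eq embedding_lower inj_onD[OF f_inj] by simp
  next
    assume "a \<in> T" "c \<in> I" then show ?thesis using eq embedding_lower embedding_fixed g_ne_f by metis
  next
    assume "a \<in> T" "c \<notin> T" "c \<notin> I" "t c \<in> T"
    then show ?thesis using eq embedding_lower embedding_partner f_ne_partner by metis
  next
    assume "a \<in> I" "c \<in> T" then show ?thesis using eq embedding_lower embedding_fixed g_ne_f by metis
  next
    assume "a \<in> I" "c \<in> I" then show ?thesis using eq embedding_fixed inj_onD[OF g_inj] by simp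
  next
    assume "a \<in> I" "c \<notin> T" "c \<notin> I" "t c \<in> T"
    then show ?thesis using eq embedding_fixed embedding_partner g_ne_partner by metis
  next
    assume "a \<notin> T" "a \<notin> I" "t a \<in> T" "c \<in> T"
    then show ?thesis using eq embedding_lower embedding_partner f_ne_partner by metis
  next
    assume "a \<notin> T" "a \<notin> I" "t a \<in> T" "c \<in> I"
    then show ?thesis using eq embedding_fixed embedding_partner g_ne_partner by metis
  qed (rule partners_eq)
qed

text \<open>For a fixed letter c sent outside I', the partner of its image is a partner of a letter of
  T' outside f(T), hence not in the image.\<close>

lemma embedding_compatible:
  assumes c: "c \<in> S" and img: "t' (embedding c) \<in> embedding ` S"
  shows "t' (embedding c) = embedding (t c)"
proof -
  have tc: "t c \<in> S" "t (t c) = c" using involution_onD[OF inv c] by auto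
  consider "c \<in> T" | "c \<in> I" | "c \<notin> T" "c \<notin> I" "t c \<in> T"
    using involution_on_letter_cases[OF inv c] by blast
  then show ?thesis
  proof cases
    case 1
    then have "t c \<notin> T" "t c \<notin> I" using tc by (auto simp: lower_letters_def fixed_letters_def)
    then show ?thesis using 1 tc embedding_lower embedding_partner by simp
  next
    case 2
    show ?thesis
    proof (cases "g c \<in> I'")
      case True
      then show ?thesis using 2 embedding_fixed by (simp add: fixed_letters_def)
    next
      case False
      then have gc: "g c \<in> T'" "g c \<notin> f ` T" using 2 g_into by auto
      obtain a where a: "a \<in> S" "t' (g c) = embedding a" using img embedding_fixed[OF 2] by auto
      have "t' (g c) \<notin> T' \<union> I'" using involution_on_partner_of_lower[OF inv' gc(1)] by blast
      then have "a \<notin> T" "a \<notin> I"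
        using a(2) f_into embedding_lower embedding_fixed g_in_lower_or_fixed by force+
      moreover have "g c \<in> S'" using gc(1) by (simp add: lower_letters_def)
      ultimately have "g c = f (t a)"
        using a embedding_partner f_in_S' involution_on_letter_cases[OF inv a(1)]
          involution_onD[OF inv'] by metis
      then show ?thesis
        using gc(2) involution_on_letter_cases[OF inv a(1)] \<open>a \<notin> T\<close> \<open>a \<notin> I\<close> by blast
    qed
  next
    case 3
    then show ?thesis
      using c embedding_lower embedding_partner f_in_S' involution_onD[OF inv'] by simp
  qed
qed

lemma involution_embedding_embedding: "involution_embedding S S' t t' embedding"
  using inj_on_embedding embedding_into embedding_compatible
  by (auto simp: involution_embedding_def)

end

lemma exists_involution_embedding:
  fixes t :: "'a::linorder \<Rightarrow> 'a" and t' :: "'b::linorder \<Rightarrow> 'b"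
  assumes inv: "involution_on S t" and inv': "involution_on S' t'"
    and fin: "finite S" "finite S'"
    and card_T: "card (lower_letters S t) \<le> card (lower_letters S' t')"
    and card_IT: "card (fixed_letters S t) + card (lower_letters S t)
                    \<le> card (fixed_letters S' t') + card (lower_letters S' t')"
  shows "\<exists>\<phi>. involution_embedding S S' t t' \<phi>"
proof -
  define T I T' I' where "T = lower_letters S t" and "I = fixed_letters S t"
    and "T' = lower_letters S' t'" and "I' = fixed_letters S' t'"
  have finite: "finite T" "finite T'" "finite I" "finite I'"
    using fin by (auto simp: T_def T'_def I_def I'_def lower_letters_def fixed_letters_def)
  obtain f where f: "f ` T \<subseteq> T'" "inj_on f T"
    using card_le_inj[OF finite(1,2)] card_T by (auto simp: T_def T'_def)
  define R where "R = I' \<union> (T' - f ` T)"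
  have "card R = card I' + (card T' - card T)"
    using finite f by (simp add: R_def card_Un_disjoint card_Diff_subset card_image
        T'_def I'_def lower_letters_def fixed_letters_def disjoint_iff)
  then have "card I \<le> card R"
    using card_T card_IT by (simp add: T_def T'_def I_def I'_def)
  moreover have "finite R" using finite by (simp add: R_def)
  ultimately obtain g where g: "g ` I \<subseteq> R" "inj_on g I"
    using card_le_inj[OF finite(3)] by blast
  interpret embedding_construction S S' t t' f g
    using inv inv' f g by unfold_locales (simp_all add: T_def T'_def I_def I'_def R_def)
  show ?thesis using involution_embedding_embedding by blast
qed

definition letter_map :: "(nat list \<Rightarrow> nat list) \<Rightarrow> nat \<Rightarrow> nat" where
  "letter_map \<theta> a = hd (\<theta> [a])"

context
  fixes S :: "nat set" and \<theta> :: "nat list \<Rightarrow> nat list"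
  assumes ai: "antimorphic_involution S \<theta>"
begin

lemma antimorphic_involution_append:
  "u \<in> lists S \<Longrightarrow> v \<in> lists S \<Longrightarrow> \<theta> (u @ v) = \<theta> v @ \<theta> u"
  using ai unfolding antimorphic_involution_def by blast

lemma antimorphic_involution_involutive: "w \<in> lists S \<Longrightarrow> \<theta> (\<theta> w) = w"
  using ai unfolding antimorphic_involution_def by blast

lemma antimorphic_involution_lists: "w \<in> lists S \<Longrightarrow> \<theta> w \<in> lists S"
  using ai unfolding antimorphic_involution_def by blast

lemma antimorphic_involution_Nil: "\<theta> [] = []"
  using antimorphic_involution_append[of "[]" "[]"] by simp

lemma length_antimorphic_involution_ge: "w \<in> lists S \<Longrightarrow> length w \<le> length (\<theta> w)"
proof (induction w)
  case (Cons a w)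
  have "\<theta> [a] \<noteq> []"
    using antimorphic_involution_involutive[of "[a]"] antimorphic_involution_Nil Cons.prems by force
  then show ?case
    using Cons antimorphic_involution_append[of "[a]" w] by (cases "\<theta> [a]") auto
qed simp

lemma length_antimorphic_involution:
  assumes "w \<in> lists S" shows "length (\<theta> w) = length w"
proof -
  have "length (\<theta> w) \<le> length (\<theta> (\<theta> w))"
    using assms antimorphic_involution_lists length_antimorphic_involution_ge by blast
  then show ?thesis
    using assms antimorphic_involution_involutive length_antimorphic_involution_ge by (metis le_antisym)
qed

lemma antimorphic_involution_singleton: "a \<in> S \<Longrightarrow> \<theta> [a] = [letter_map \<theta> a]"
  using length_antimorphic_involution[of "[a]"] by (cases "\<theta> [a]") (auto simp: letter_map_def)

lemma antimorphic_involution_eq_rev_map: "w \<in> lists S \<Longrightarrow> \<theta> w = rev (map (letter_map \<theta>) w)"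
proof (induction w)
  case (Cons a w)
  then show ?case
    using antimorphic_involution_append[of "[a]" w] antimorphic_involution_singleton by simp
qed (simp add: antimorphic_involution_Nil)

lemma involution_on_letter_map: "involution_on S (letter_map \<theta>)"
  unfolding involution_on_def
proof
  fix a assume a: "a \<in> S"
  have in_S: "letter_map \<theta> a \<in> S"
    using antimorphic_involution_lists[of "[a]"] antimorphic_involution_singleton[OF a] a by simp
  have "[a] = \<theta> (\<theta> [a])" using antimorphic_involution_involutive[of "[a]"] a by simp
  also have "\<dots> = [letter_map \<theta> (letter_map \<theta> a)]"
    using antimorphic_involution_singleton a in_S by simp
  finally show "letter_map \<theta> a \<in> S \<and> letter_map \<theta> (letter_map \<theta> a) = a"
    using in_S by simp
qed

lemma Idt_eq_fixed_letters: "Idt S \<theta> = fixed_letters S (letter_map \<theta>)"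
  unfolding Idt_def fixed_letters_def using antimorphic_involution_singleton by auto

lemma Trn_eq_lower_letters: "Trn S \<theta> = lower_letters S (letter_map \<theta>)"
  unfolding Trn_def lower_letters_def using antimorphic_involution_singleton by auto

end

lemma concat_eq_map_imp: "concat vs = map f w \<Longrightarrow> \<exists>us. vs = map (map f) us \<and> concat us = w"
proof (induction vs arbitrary: w)
  case (Cons v vs)
  then obtain w\<^sub>1 w\<^sub>2 where "w = w\<^sub>1 @ w\<^sub>2" "v = map f w\<^sub>1" "concat vs = map f w\<^sub>2"
    by (metis concat.simps(2) map_eq_append_conv)
  with Cons.IH[of w\<^sub>2] show ?case by (metis concat.simps(2) list.simps(9))
qed simp

lemma involution_embedding_reflects_image:
  assumes ai: "antimorphic_involution S \<theta>" and ai': "antimorphic_involution S' \<theta>'"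
    and emb: "involution_embedding S S' (letter_map \<theta>) (letter_map \<theta>') \<phi>"
    and u: "u \<in> lists S" and v: "v \<in> lists S" and eq: "map \<phi> v = \<theta>' (map \<phi> u)"
  shows "v = \<theta> u"
proof -
  define t t' where "t = letter_map \<theta>" and "t' = letter_map \<theta>'"
  have inj: "inj_on \<phi> S" and compatible: "\<And>c. c \<in> S \<Longrightarrow> t' (\<phi> c) \<in> \<phi> ` S \<Longrightarrow> t' (\<phi> c) = \<phi> (t c)"
    using emb by (auto simp: involution_embedding_def t_def t'_def)
  have "map \<phi> u \<in> lists S'" using u emb by (auto simp: involution_embedding_def image_subset_iff)
  then have map_v: "map \<phi> v = map (t' \<circ> \<phi>) (rev u)"
    using eq antimorphic_involution_eq_rev_map[OF ai'] by (simp add: t'_def rev_map)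
  have "\<theta> u = map t (rev u)"
    using antimorphic_involution_eq_rev_map[OF ai u] by (simp add: t_def rev_map)
  moreover have "v = map t (rev u)"
  proof (rule nth_equalityI)
    show "length v = length (map t (rev u))" using map_eq_imp_length_eq[OF map_v] by simp
    fix i assume i: "i < length v"
    then have i': "i < length u" using map_eq_imp_length_eq[OF map_v] by simp
    define r where "r = rev u ! i"
    have "r \<in> S" using u i' nth_mem[of i "rev u"] by (auto simp: r_def)
    moreover have "v ! i \<in> S" using v i by auto
    moreover have "\<phi> (v ! i) = t' (\<phi> r)"
      using arg_cong[OF map_v, of "\<lambda>xs. xs ! i"] i i' by (simp add: r_def)
    ultimately have "\<phi> (v ! i) = \<phi> (t r)" using compatible by (metis image_eqI)
    then show "v ! i = map t (rev u) ! i"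
      using inj \<open>r \<in> S\<close> \<open>v ! i \<in> S\<close> involution_on_letter_map[OF ai] i'
      by (auto simp: r_def t_def involution_on_def inj_on_def)
  qed
  ultimately show ?thesis by simp
qed

lemma pseudo_power_of_map:
  assumes ai: "antimorphic_involution S \<theta>" and ai': "antimorphic_involution S' \<theta>'"
    and emb: "involution_embedding S S' (letter_map \<theta>) (letter_map \<theta>') \<phi>"
    and w: "w \<in> lists S" and pp: "pseudo_power \<theta>' k (map \<phi> w)"
  shows "pseudo_power \<theta> k w"
proof -
  obtain vs where vs: "length vs = k" "concat vs = map \<phi> w"
    and related: "\<forall>i<k. \<forall>j<k. vs ! i = vs ! j \<or> vs ! i = \<theta>' (vs ! j)"
    using pp unfolding pseudo_power_def by blast
  obtain us where us: "vs = map (map \<phi>) us" "concat us = w"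
    using concat_eq_map_imp[OF vs(2)] by blast
  have factor: "us ! i \<in> lists S" if "i < k" for i
    using that w us vs(1) by (auto simp: set_concat)
  have "us ! i = us ! j \<or> us ! i = \<theta> (us ! j)" if i: "i < k" and j: "j < k" for i j
  proof -
    have "map \<phi> (us ! i) = map \<phi> (us ! j) \<or> map \<phi> (us ! i) = \<theta>' (map \<phi> (us ! j))"
      using related i j us(1) vs(1) by auto
    moreover have "inj_on \<phi> (set (us ! i) \<union> set (us ! j))"
      using emb factor[OF i] factor[OF j] by (auto simp: involution_embedding_def intro: inj_on_subset)
    ultimately show ?thesis
      using inj_on_map_eq_map involution_embedding_reflects_image[OF ai ai' emb factor[OF j] factor[OF i]]
      by blast
  qed
  moreover have "w \<noteq> []" using pp by (auto simp: pseudo_power_def)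
  ultimately show ?thesis
    unfolding pseudo_power_def using us vs(1) by auto
qed

lemma infinite_pseudo_power_free_map:
  assumes ai: "antimorphic_involution S \<theta>" and ai': "antimorphic_involution S' \<theta>'"
    and emb: "involution_embedding S S' (letter_map \<theta>) (letter_map \<theta>') \<phi>"
    and x: "infinite_pseudo_power_free S \<theta> k x"
  shows "infinite_pseudo_power_free S' \<theta>' k (\<phi> \<circ> x)"
  unfolding infinite_pseudo_power_free_def
proof (intro conjI allI impI)
  show "(\<phi> \<circ> x) n \<in> S'" for n
    using x emb by (auto simp: infinite_pseudo_power_free_def involution_embedding_def)
  fix i j :: nat assume "i < j"
  then have "\<not> pseudo_power \<theta> k (map x [i..<j])"
    using x by (simp add: infinite_pseudo_power_free_def)
  moreover have "map x [i..<j] \<in> lists S" using x by (auto simp: infinite_pseudo_power_free_def)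
  ultimately show "\<not> pseudo_power \<theta>' k (map (\<phi> \<circ> x) [i..<j])"
    using pseudo_power_of_map[OF ai ai' emb] by (metis map_map)
qed

theorem mainTheorem14:
  fixes k :: nat and S S' :: "nat set" and \<theta> \<theta>' :: "nat list \<Rightarrow> nat list"
  assumes "k \<ge> 2"
    and "finite S" and "finite S'"
    and "antimorphic_involution S \<theta>" and "antimorphic_involution S' \<theta>'"
    and "card (Trn S' \<theta>') \<ge> card (Trn S \<theta>)"
    and "card (Idt S' \<theta>') + card (Trn S' \<theta>') \<ge> card (Idt S \<theta>) + card (Trn S \<theta>)"
    and "\<exists>x. infinite_pseudo_power_free S \<theta> k x"
  shows "\<exists>x'. infinite_pseudo_power_free S' \<theta>' k x'"
proof -
  obtain x where x: "infinite_pseudo_power_free S \<theta> k x" using assms(8) by blast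
  obtain \<phi> where \<phi>: "involution_embedding S S' (letter_map \<theta>) (letter_map \<theta>') \<phi>"
    using exists_involution_embedding[OF involution_on_letter_map[OF assms(4)]
        involution_on_letter_map[OF assms(5)] assms(2,3)] assms(6,7)
    unfolding Trn_eq_lower_letters[OF assms(4)] Trn_eq_lower_letters[OF assms(5)]
      Idt_eq_fixed_letters[OF assms(4)] Idt_eq_fixed_letters[OF assms(5)]
    by blast
  show ?thesis using infinite_pseudo_power_free_map[OF assms(4,5) \<phi> x] by blast
qed

end
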